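(* Let $\mathbf{A}\in\mathbb{R}^{m\times n}$ be $s$-regular, where $s$ is an integer with $0<s<n$, let $\mathbf{b}\in\mathbb{R}^m$, and let $f(\mathbf{x})=\|\mathbf{A}\mathbf{x}-\mathbf{b}\|^2$, whose gradient is Lipschitz with constant $L(f)=2\lambda_{\max}(\mathbf{A}^T\mathbf{A})$. Then any sequence generated by the IHT method with constant $L>L(f)$ converges to an $L$-stationary point of the problem (P): minimize $f(\mathbf{x})$ subject to $\|\mathbf{x}\|_0\le s$.
   Context: A matrix $\mathbf{A}$ is $s$-regular if for every $I\subseteq\{1,\dots,n\}$ with $|I|=s$ the columns of $\mathbf{A}$ indexed by $I$ are linearly independent. $C_s=\{\mathbf{x}:\|\mathbf{x}\|_0\le s\}$ where $\|\mathbf{x}\|_0$ is the number of nonzero components. $P_{C_s}(\mathbf{y})=\operatorname{argmin}_{\mathbf{x}\in C_s}\|\mathbf{x}-\mathbf{y}\|^2$ (possibly multi-valued). The IHT method with constant $L$: choose $\mathbf{x}^0\in C_s$ and for $k=0,1,2,\dots$ pick any $\mathbf{x}^{k+1}\in P_{C_s}\!\left(\mathbf{x}^k-\frac1L\nabla f(\mathbf{x}^k)\right)$. A point $\mathbf{x}^*\in C_s$ is $L$-stationary if $\mathbf{x}^*\in P_{C_s}\!\left(\mathbf{x}^*-\frac1L\nabla f(\mathbf{x}^* )\right)$. *)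

theory Defs
  imports "HOL-Analysis.Analysis"
begin

definition l0norm :: "real ^ 'n \<Rightarrow> nat" where
  "l0norm x = card {i. x $ i \<noteq> 0}"

definition sparse_set :: "nat \<Rightarrow> (real ^ 'n) set" where
  "sparse_set s = {x. l0norm x \<le> s}"

definition proj_sparse :: "nat \<Rightarrow> real ^ 'n \<Rightarrow> (real ^ 'n) set" where
  "proj_sparse s y = {x \<in> sparse_set s. \<forall>z \<in> sparse_set s. (norm (x - y))\<^sup>2 \<le> (norm (z - y))\<^sup>2}"

text \<open>s-regularity: every s columns are linearly independent (as a family).\<close>
definition s_regular :: "nat \<Rightarrow> real ^ 'n ^ 'm \<Rightarrow> bool" where
  "s_regular s A \<longleftrightarrow> (\<forall>I :: 'n set. card I = s \<longrightarrow>
      inj_on (\<lambda>i. column i A) I \<and> independent ((\<lambda>i. column i A) ` I))"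

definition lambda_max :: "real ^ 'n ^ 'n \<Rightarrow> real" where
  "lambda_max M = Max {c. \<exists>v. v \<noteq> 0 \<and> M *v v = c *\<^sub>R v}"

definition IHT_seq :: "nat \<Rightarrow> real \<Rightarrow> (real ^ 'n \<Rightarrow> real ^ 'n) \<Rightarrow> (nat \<Rightarrow> real ^ 'n) \<Rightarrow> bool" where
  "IHT_seq s L g x \<longleftrightarrow> x 0 \<in> sparse_set s \<and>
     (\<forall>k. x (Suc k) \<in> proj_sparse s (x k - (1 / L) *\<^sub>R g (x k)))"

definition L_stationary :: "nat \<Rightarrow> real \<Rightarrow> (real ^ 'n \<Rightarrow> real ^ 'n) \<Rightarrow> real ^ 'n \<Rightarrow> bool" where
  "L_stationary s L g x \<longleftrightarrow> x \<in> sparse_set s \<and> x \<in> proj_sparse s (x - (1 / L) *\<^sub>R g x)"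

end

theory Submission
  imports Defs
begin

text \<open>
  Since \<open>L\<close> exceeds twice the largest eigenvalue \<open>\<lambda>\<close> of \<open>A\<^sup>T A\<close>, the quadratic upper bound
  \<open>f v \<le> f u + \<nabla>f u \<bullet> (v - u) + \<lambda> \<parallel>v - u\<parallel>\<^sup>2\<close> and the projection step give the sufficient
  decrease \<open>(L/2 - \<lambda>) \<parallel>x\<^sub>k\<^sub>+\<^sub>1 - x\<^sub>k\<parallel>\<^sup>2 \<le> f x\<^sub>k - f x\<^sub>k\<^sub>+\<^sub>1\<close>. Hence the steps tend to zero and
  the iterates stay in a sublevel set of \<open>f\<close> inside \<open>C\<^sub>s\<close>, which is bounded because
  \<open>s\<close>-regularity makes \<open>A\<close> injective on every coordinate subspace of dimension \<open>s\<close>.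
  Every limit point of the iterates is \<open>L\<close>-stationary, and an \<open>L\<close>-stationary point is the
  unique zero of the gradient of \<open>f\<close> restricted to some \<open>s\<close>-element support, so there are
  only finitely many of them. A bounded sequence whose steps tend to zero and whose limit
  points lie in a finite set converges.
\<close>

lemma transpose_matrix_vector_inner:
  fixes A :: "real ^ 'n ^ 'm"
  shows "(transpose A *v u) \<bullet> w = u \<bullet> (A *v w)"
proof -
  have "transpose A *v u = u v* A"
    using vector_transpose_matrix[of u "transpose A"] by simp
  then show ?thesis
    by (simp add: dot_lmul_matrix)
qed

lemma has_derivative_least_squares:
  fixes A :: "real ^ 'n ^ 'm"
  shows "((\<lambda>y. (norm (A *v y - b))\<^sup>2) has_derivative
           (\<lambda>h. (2 *\<^sub>R (transpose A *v (A *v y - b))) \<bullet> h)) (at y)"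
proof -
  have "((\<lambda>y. A *v y - b) has_derivative (*v) A) (at y)"
    by (auto intro!: derivative_eq_intros bounded_linear_imp_has_derivative
             simp: linear_conv_bounded_linear)
  from has_derivative_inner[OF this this] show ?thesis
    unfolding power2_norm_eq_inner
    by (rule has_derivative_eq_rhs)
       (simp only: inner_scaleR_left transpose_matrix_vector_inner, simp add: fun_eq_iff inner_commute)
qed

lemma gram_eigenvector_of_maximizer:
  fixes A :: "real ^ 'n ^ 'm"
  assumes bound: "\<And>u. (norm (A *v u))\<^sup>2 \<le> \<mu> * (norm u)\<^sup>2"
    and attained: "(norm (A *v v))\<^sup>2 = \<mu> * (norm v)\<^sup>2"
  shows "(transpose A ** A) *v v = \<mu> *\<^sub>R v"
proof -
  \<comment> \<open>\<open>v\<close> minimises \<open>\<phi> \<ge> 0\<close>, so the gradient \<open>w\<close> of \<open>\<phi>\<close> vanishes at \<open>v\<close>.\<close>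
  define \<phi> where "\<phi> u = \<mu> * (u \<bullet> u) - (norm (A *v u))\<^sup>2" for u :: "real ^ 'n"
  define w where "w = 2 *\<^sub>R (\<mu> *\<^sub>R v - transpose A *v (A *v v))"
  have "(\<phi> has_derivative (\<bullet>) w) (at v)"
    unfolding \<phi>_def
    by (rule has_derivative_eq_rhs,
        (rule derivative_intros has_derivative_least_squares[of A 0, simplified])+)
       (simp add: w_def fun_eq_iff algebra_simps inner_diff_left inner_commute)
  moreover have "\<phi> v \<le> \<phi> u" for u
    using bound[of u] attained by (simp add: \<phi>_def power2_norm_eq_inner)
  ultimately have "(\<bullet>) w = (\<lambda>h. 0)"
    by (intro differential_zero_maxmin[of v UNIV]) auto
  then have "w = 0"
    by (metis inner_eq_zero_iff)
  then show ?thesis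
    by (simp add: w_def matrix_vector_mul_assoc)
qed

lemma finite_eigenvalues_symmetric:
  fixes M :: "real ^ 'n ^ 'n"
  assumes sym: "transpose M = M"
  shows "finite {c. \<exists>v. v \<noteq> 0 \<and> M *v v = c *\<^sub>R v}" (is "finite ?E")
proof -
  obtain ev where ev: "\<And>c. c \<in> ?E \<Longrightarrow> ev c \<noteq> 0 \<and> M *v ev c = c *\<^sub>R ev c"
    using bchoice[of ?E "\<lambda>c v. v \<noteq> 0 \<and> M *v v = c *\<^sub>R v"] by auto
  have inj: "inj_on ev ?E"
  proof (rule inj_onI)
    fix c d assume cd: "c \<in> ?E" "d \<in> ?E" "ev c = ev d"
    have "c *\<^sub>R ev c = M *v ev c"
      using ev[OF cd(1)] by simp
    also have "\<dots> = d *\<^sub>R ev c"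
      using ev[OF cd(2)] cd(3) by simp
    finally show "c = d"
      using ev[OF cd(1)] by simp
  qed
  have "orthogonal (ev c) (ev d)" if cd: "c \<in> ?E" "d \<in> ?E" "ev c \<noteq> ev d" for c d
  proof -
    have "c * (ev c \<bullet> ev d) = (M *v ev c) \<bullet> ev d"
      using ev[OF cd(1)] by simp
    also have "\<dots> = ev c \<bullet> (M *v ev d)"
      using transpose_matrix_vector_inner[of M "ev c" "ev d"] by (simp add: sym)
    also have "\<dots> = d * (ev c \<bullet> ev d)"
      using ev[OF cd(2)] by simp
    finally show ?thesis
      using cd unfolding orthogonal_def by auto
  qed
  then have "pairwise orthogonal (ev ` ?E)"
    by (auto simp: pairwise_def)
  moreover have "0 \<notin> ev ` ?E"
    using ev by force
  ultimately have "independent (ev ` ?E)"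
    by (rule pairwise_orthogonal_independent)
  then have "finite (ev ` ?E)"
    by (simp add: independent_bound)
  then show ?thesis
    using finite_imageD inj by blast
qed

lemma le_lambda_max:
  fixes M :: "real ^ 'n ^ 'n"
  assumes "transpose M = M" and "v \<noteq> 0" and "M *v v = c *\<^sub>R v"
  shows "c \<le> lambda_max M"
  unfolding lambda_max_def using assms by (intro Max_ge finite_eigenvalues_symmetric) auto

lemma gram_top_eigenvalue:
  fixes A :: "real ^ 'n ^ 'm"
  obtains \<mu> v where "0 \<le> \<mu>" "v \<noteq> 0" "(transpose A ** A) *v v = \<mu> *\<^sub>R v"
    and "\<And>u. (norm (A *v u))\<^sup>2 \<le> \<mu> * (norm u)\<^sup>2"
proof -
  have ne: "sphere (0 :: real ^ 'n) 1 \<noteq> {}"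
    by simp
  have cont: "continuous_on (sphere 0 1) (\<lambda>v. (norm (A *v v))\<^sup>2)"
    by (intro continuous_intros)
  obtain v where v: "v \<in> sphere 0 1"
    and max: "\<forall>y\<in>sphere 0 1. (norm (A *v y))\<^sup>2 \<le> (norm (A *v v))\<^sup>2"
    using continuous_attains_sup[OF compact_sphere ne cont] by blast
  define \<mu> where "\<mu> = (norm (A *v v))\<^sup>2"
  have bound: "(norm (A *v u))\<^sup>2 \<le> \<mu> * (norm u)\<^sup>2" for u
  proof (cases "u = 0")
    case False
    have "(norm (A *v (inverse (norm u) *\<^sub>R u)))\<^sup>2 \<le> \<mu>"
      using max[rule_format, of "inverse (norm u) *\<^sub>R u"] False by (simp add: \<mu>_def)
    then show ?thesis
      using False by (simp add: matrix_vector_mult_scaleR field_simps)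
  qed simp
  show ?thesis
  proof (rule that)
    show "(transpose A ** A) *v v = \<mu> *\<^sub>R v"
      using bound v by (intro gram_eigenvector_of_maximizer) (simp_all add: \<mu>_def)
  qed (use v bound in \<open>auto simp: \<mu>_def\<close>)
qed

lemma lambda_max_gram_nonneg:
  fixes A :: "real ^ 'n ^ 'm"
  shows "0 \<le> lambda_max (transpose A ** A)"
proof -
  obtain \<mu> v where "0 \<le> \<mu>" "v \<noteq> 0" "(transpose A ** A) *v v = \<mu> *\<^sub>R v"
    by (rule gram_top_eigenvalue)
  then show ?thesis
    using le_lambda_max[of "transpose A ** A"] by (force simp: matrix_transpose_mul)
qed

lemma norm_matrix_vector_sq_le_lambda_max:
  fixes A :: "real ^ 'n ^ 'm"
  shows "(norm (A *v h))\<^sup>2 \<le> lambda_max (transpose A ** A) * (norm h)\<^sup>2"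
proof -
  obtain \<mu> v where "v \<noteq> 0" "(transpose A ** A) *v v = \<mu> *\<^sub>R v"
    and bound: "\<And>u. (norm (A *v u))\<^sup>2 \<le> \<mu> * (norm u)\<^sup>2"
    using gram_top_eigenvalue[of A] by blast
  then have "\<mu> \<le> lambda_max (transpose A ** A)"
    by (intro le_lambda_max) (simp_all add: matrix_transpose_mul)
  then have "\<mu> * (norm h)\<^sup>2 \<le> lambda_max (transpose A ** A) * (norm h)\<^sup>2"
    by (rule mult_right_mono) simp
  with bound[of h] show ?thesis
    by linarith
qed

definition coord_subspace :: "'n set \<Rightarrow> (real ^ 'n) set" where
  "coord_subspace I = {x. \<forall>i. i \<notin> I \<longrightarrow> x $ i = 0}"

lemma subspace_coord_subspace: "subspace (coord_subspace I)"
  unfolding subspace_def coord_subspace_def by auto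

lemma exists_superset_card:
  fixes S :: "'a::finite set"
  assumes "card S \<le> s" and "s \<le> CARD('a)"
  obtains I where "S \<subseteq> I" and "card I = s"
proof -
  have "s - card S \<le> card (UNIV - S)"
    using assms by (simp add: card_Diff_subset)
  then obtain T where T: "T \<subseteq> UNIV - S" "card T = s - card S"
    by (metis obtain_subset_with_card_n)
  then have "card (S \<union> T) = s"
    using assms(1) by (subst card_Un_disjoint) auto
  then show ?thesis
    by (intro that[of "S \<union> T"]) auto
qed

lemma sparse_in_coord_subspace:
  fixes x :: "real ^ 'n"
  assumes "l0norm x \<le> s" and "s \<le> CARD('n)"
  obtains I where "card I = s" and "x \<in> coord_subspace I"
proof -
  obtain I where "{i. x $ i \<noteq> 0} \<subseteq> I" "card I = s"
    using exists_superset_card assms unfolding l0norm_def by blast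
  then show ?thesis
    by (intro that[of I]) (auto simp: coord_subspace_def)
qed

lemma s_regular_kernel_coord_subspace:
  fixes A :: "real ^ 'n ^ 'm"
  assumes reg: "s_regular s A" and I: "card I = s"
    and x: "x \<in> coord_subspace I" and Ax: "A *v x = 0"
  shows "x = 0"
proof -
  let ?c = "\<lambda>i. column i A"
  have inj: "inj_on ?c I" and ind: "independent (?c ` I)"
    using reg I unfolding s_regular_def by auto
  have "A *v x = (\<Sum>i\<in>UNIV. x $ i *\<^sub>R ?c i)"
    by (simp add: matrix_mult_sum scalar_mult_eq_scaleR)
  also have "\<dots> = (\<Sum>i\<in>I. x $ i *\<^sub>R ?c i)"
    using x unfolding coord_subspace_def by (intro sum.mono_neutral_right) auto
  also have "\<dots> = (\<Sum>v\<in>?c ` I. x $ inv_into I ?c v *\<^sub>R v)"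
    by (simp add: sum.reindex[OF inj] inv_into_f_f[OF inj])
  finally have sum0: "(\<Sum>v\<in>?c ` I. x $ inv_into I ?c v *\<^sub>R v) = 0"
    using Ax by simp
  have "x $ i = 0" if "i \<in> I" for i
  proof -
    have "x $ inv_into I ?c (?c i) = 0"
      using real_vector.independentD[OF ind _ order_refl sum0] that by simp
    then show ?thesis
      using that inv_into_f_f[OF inj] by simp
  qed
  with x show ?thesis
    by (auto simp: vec_eq_iff coord_subspace_def)
qed

lemma bounded_sparse_sublevel:
  fixes A :: "real ^ 'n ^ 'm"
  assumes reg: "s_regular s A" and s: "s \<le> CARD('n)"
  shows "bounded {x \<in> sparse_set s. norm (A *v x) \<le> R}"
proof -
  have "\<exists>e>0. \<forall>x\<in>coord_subspace I. e * norm x \<le> norm (A *v x)" if I: "card I = s" for I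
    by (rule injective_imp_isometric)
       (auto simp: closed_subspace subspace_coord_subspace linear_conv_bounded_linear
             intro: s_regular_kernel_coord_subspace[OF reg I])
  then obtain e where e: "\<And>I. card I = s \<Longrightarrow> e I > 0 \<and> (\<forall>x\<in>coord_subspace I. e I * norm x \<le> norm (A *v x))"
    by metis
  have sub: "{x \<in> sparse_set s. norm (A *v x) \<le> R} \<subseteq> (\<Union>I\<in>{I. card I = s}. cball 0 (R / e I))"
  proof clarify
    fix x assume "x \<in> sparse_set s" and xR: "norm (A *v x) \<le> R"
    then obtain I where I: "card I = s" "x \<in> coord_subspace I"
      using sparse_in_coord_subspace s unfolding sparse_set_def by blast
    then have "e I * norm x \<le> R"
      using e xR by force
    then show "x \<in> (\<Union>I\<in>{I. card I = s}. cball 0 (R / e I))"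
      using e I by (auto simp: field_simps)
  qed
  show ?thesis
    by (rule bounded_subset[OF _ sub]) (auto intro: bounded_UN)
qed

lemma least_squares_gradient:
  fixes A :: "real ^ 'n ^ 'm"
  assumes f: "\<And>y. f y = (norm (A *v y - b))\<^sup>2"
    and g: "\<And>y. (f has_derivative (\<lambda>h. g y \<bullet> h)) (at y)"
  shows "g y = 2 *\<^sub>R (transpose A *v (A *v y - b))"
proof -
  have "f = (\<lambda>y. (norm (A *v y - b))\<^sup>2)"
    using f by blast
  then have "(f has_derivative (\<bullet>) (2 *\<^sub>R (transpose A *v (A *v y - b)))) (at y)"
    by (simp only: has_derivative_least_squares)
  from has_derivative_unique[OF g this] show ?thesis
    by (metis vector_eq_rdot)
qed

lemma least_squares_expansion:
  fixes A :: "real ^ 'n ^ 'm"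
  shows "(norm (A *v v - b))\<^sup>2 = (norm (A *v u - b))\<^sup>2
     + (2 *\<^sub>R (transpose A *v (A *v u - b))) \<bullet> (v - u) + (norm (A *v (v - u)))\<^sup>2"
proof -
  have split: "A *v v - b = (A *v u - b) + A *v (v - u)"
    by (simp add: matrix_vector_mult_diff_distrib)
  have "(norm ((A *v u - b) + A *v (v - u)))\<^sup>2 = (norm (A *v u - b))\<^sup>2
      + 2 * ((A *v u - b) \<bullet> (A *v (v - u))) + (norm (A *v (v - u)))\<^sup>2"
    unfolding power2_norm_eq_inner by (simp add: inner_add_left inner_add_right inner_commute)
  then show ?thesis
    unfolding split inner_scaleR_left transpose_matrix_vector_inner by simp
qed

lemma norm_sq_coordinate_split:
  fixes v :: "real ^ 'n"
  shows "(norm v)\<^sup>2 = (v $ j)\<^sup>2 + (norm (\<chi> k. if k = j then 0 else v $ k))\<^sup>2"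
proof -
  have sq: "(norm w)\<^sup>2 = (\<Sum>k\<in>UNIV. (w $ k)\<^sup>2)" for w :: "real ^ 'n"
    unfolding power2_norm_eq_inner inner_vec_def by (simp add: power2_eq_square)
  show ?thesis
    unfolding sq by (simp add: sum.remove[of UNIV j] if_distrib sum.If_cases)
qed

lemma L_stationary_gradient_coordinate_zero:
  fixes p :: "real ^ 'n"
  assumes L: "L > 0" and st: "L_stationary s L g p"
    and sparse: "l0norm (\<chi> k. if k = j then (p - (1/L) *\<^sub>R g p) $ j else p $ k) \<le> s"
  shows "g p $ j = 0"
proof -
  define y where "y = p - (1/L) *\<^sub>R g p"
  define z where "z = (\<chi> k. if k = j then y $ j else p $ k)"
  have "z \<in> sparse_set s"
    using sparse unfolding z_def y_def sparse_set_def by simp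
  then have "(norm (p - y))\<^sup>2 \<le> (norm (z - y))\<^sup>2"
    using st unfolding L_stationary_def proj_sparse_def y_def by auto
  moreover have "z - y = (\<chi> k. if k = j then 0 else (p - y) $ k)"
    by (simp add: z_def vec_eq_iff)
  ultimately have "((p - y) $ j)\<^sup>2 \<le> 0"
    using norm_sq_coordinate_split[of "p - y" j] by simp
  then show ?thesis
    using L by (simp add: y_def)
qed

lemma L_stationary_support:
  fixes p :: "real ^ 'n"
  assumes L: "L > 0" and st: "L_stationary s L g p" and s: "s \<le> CARD('n)"
  obtains I where "card I = s" and "p \<in> coord_subspace I" and "\<And>i. i \<in> I \<Longrightarrow> g p $ i = 0"
proof -
  let ?S = "{i. p $ i \<noteq> 0}"
  have "card ?S \<le> s"
    using st unfolding L_stationary_def sparse_set_def l0norm_def by simp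
  then obtain I where I: "?S \<subseteq> I" "card I = s"
    using exists_superset_card s by blast
  have "g p $ j = 0" if "j \<in> I" for j
  proof (rule L_stationary_gradient_coordinate_zero[OF L st])
    have "{k. (\<chi> k. if k = j then (p - (1/L) *\<^sub>R g p) $ j else p $ k) $ k \<noteq> 0} \<subseteq> I"
      using I that by auto
    then show "l0norm (\<chi> k. if k = j then (p - (1/L) *\<^sub>R g p) $ j else p $ k) \<le> s"
      unfolding l0norm_def using I(2) by (metis card_mono finite)
  qed
  moreover have "p \<in> coord_subspace I"
    using I unfolding coord_subspace_def by auto
  ultimately show ?thesis
    using I that by blast
qed

lemma least_squares_critical_point_unique:
  fixes A :: "real ^ 'n ^ 'm"
  assumes reg: "s_regular s A" and I: "card I = s"
    and g: "\<And>y. g y = 2 *\<^sub>R (transpose A *v (A *v y - b))"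
    and p: "p \<in> coord_subspace I" "\<And>i. i \<in> I \<Longrightarrow> g p $ i = 0"
    and q: "q \<in> coord_subspace I" "\<And>i. i \<in> I \<Longrightarrow> g q $ i = 0"
  shows "p = q"
proof -
  have "(g p - g q) $ k \<bullet> (p - q) $ k = 0" for k
    using p q unfolding coord_subspace_def by (cases "k \<in> I") auto
  then have "(g p - g q) \<bullet> (p - q) = 0"
    unfolding inner_vec_def by (intro sum.neutral) blast
  moreover have "(g p - g q) \<bullet> (p - q) = 2 * (norm (A *v (p - q)))\<^sup>2"
    unfolding g power2_norm_eq_inner
    by (simp only: scaleR_diff_right[symmetric] matrix_vector_mult_diff_distrib[symmetric]
        diff_diff_eq2 inner_scaleR_left transpose_matrix_vector_inner)
       (simp add: algebra_simps)
  ultimately have "A *v (p - q) = 0"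
    by simp
  moreover have "p - q \<in> coord_subspace I"
    using p q by (simp add: subspace_coord_subspace subspace_diff)
  ultimately have "p - q = 0"
    using s_regular_kernel_coord_subspace[OF reg I] by blast
  then show ?thesis
    by simp
qed

lemma finite_L_stationary_least_squares:
  fixes A :: "real ^ 'n ^ 'm"
  assumes reg: "s_regular s A" and L: "L > 0" and s: "s \<le> CARD('n)"
    and g: "\<And>y. g y = 2 *\<^sub>R (transpose A *v (A *v y - b))"
  shows "finite {p. L_stationary s L g p}"
proof -
  define crit where "crit I = (THE p. p \<in> coord_subspace I \<and> (\<forall>i\<in>I. g p $ i = 0))" for I
  have "p = crit I" if "card I = s" "p \<in> coord_subspace I" "\<And>i. i \<in> I \<Longrightarrow> g p $ i = 0" for p I
    unfolding crit_def
    by (rule the_equality[symmetric])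
       (use that least_squares_critical_point_unique[OF reg _ g] in auto)
  then have "{p. L_stationary s L g p} \<subseteq> range crit"
    using L_stationary_support[OF L _ s] by (metis mem_Collect_eq rangeI subsetI)
  then show ?thesis
    by (rule finite_subset) simp
qed

lemma IHT_seq_sparse:
  assumes "IHT_seq s L g x"
  shows "x k \<in> sparse_set s"
  using assms unfolding IHT_seq_def proj_sparse_def by (cases k) auto

lemma bounded_IHT_seq:
  fixes A :: "real ^ 'n ^ 'm"
  assumes reg: "s_regular s A" and s: "s \<le> CARD('n)" and iht: "IHT_seq s L g x"
    and descent: "\<And>k. norm (A *v x k - b) \<le> norm (A *v x 0 - b)"
  shows "bounded (range x)"
proof -
  have "norm (A *v x k) \<le> norm (A *v x 0 - b) + norm b" for k
    using descent[of k] norm_triangle_sub[of "A *v x k" b] by (simp add: norm_minus_commute)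
  then show ?thesis
    using IHT_seq_sparse[OF iht] by (intro bounded_subset[OF bounded_sparse_sublevel[OF reg s]]) auto
qed

lemma IHT_sufficient_decrease:
  assumes iht: "IHT_seq s L g x" and L: "L > 0"
    and upper: "\<And>u v. f v \<le> f u + g u \<bullet> (v - u) + c * (norm (v - u))\<^sup>2"
  shows "(L / 2 - c) * (norm (x (Suc k) - x k))\<^sup>2 \<le> f (x k) - f (x (Suc k))"
proof -
  define D where "D = x (Suc k) - x k"
  define G where "G = g (x k)"
  \<comment> \<open>\<open>x k\<close> itself competes in the projection that defines \<open>x (Suc k)\<close>.\<close>
  have "(norm (x (Suc k) - (x k - (1/L) *\<^sub>R G)))\<^sup>2 \<le> (norm (x k - (x k - (1/L) *\<^sub>R G)))\<^sup>2"
    using iht IHT_seq_sparse[OF iht, of k] unfolding IHT_seq_def proj_sparse_def G_def by blast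
  then have "(norm (D + (1/L) *\<^sub>R G))\<^sup>2 \<le> (norm ((1/L) *\<^sub>R G))\<^sup>2"
    by (simp add: D_def algebra_simps)
  then have "(norm D)\<^sup>2 + 2 * (1/L) * (G \<bullet> D) \<le> 0"
    unfolding power2_norm_eq_inner by (simp add: inner_add_left inner_add_right inner_commute)
  then have "G \<bullet> D \<le> - (L / 2) * (norm D)\<^sup>2"
    using L by (simp add: field_simps)
  moreover have "f (x (Suc k)) \<le> f (x k) + G \<bullet> D + c * (norm D)\<^sup>2"
    using upper[where u = "x k" and v = "x (Suc k)"] by (simp add: D_def G_def)
  ultimately show ?thesis
    by (simp add: D_def algebra_simps)
qed

lemma steps_tendsto_zero_of_sufficient_decrease:
  fixes x :: "nat \<Rightarrow> 'a::real_normed_vector"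
  assumes c: "c > 0"
    and decrease: "\<And>k. c * (norm (x (Suc k) - x k))\<^sup>2 \<le> F k - F (Suc k)"
    and lower: "\<And>k. B \<le> F k"
  shows "(\<lambda>k. x (Suc k) - x k) \<longlonglongrightarrow> 0"
proof -
  have "decseq F"
    using decrease c by (intro decseq_SucI) (smt (verit) mult_nonneg_nonneg zero_le_power2)
  then obtain Flim where "F \<longlonglongrightarrow> Flim"
    using lower decseq_convergent by blast
  then have gap: "(\<lambda>k. (F k - F (Suc k)) / c) \<longlonglongrightarrow> 0"
    using tendsto_diff[OF _ LIMSEQ_Suc] tendsto_divide_zero by fastforce
  have bound: "(norm (x (Suc k) - x k))\<^sup>2 \<le> (F k - F (Suc k)) / c" for k
    using decrease[of k] c by (simp add: field_simps mult.commute)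
  have "(\<lambda>k. (norm (x (Suc k) - x k))\<^sup>2) \<longlonglongrightarrow> 0"
    by (rule tendsto_sandwich[OF _ _ tendsto_const gap]) (simp_all add: bound)
  then have "(\<lambda>k. norm (x (Suc k) - x k)) \<longlonglongrightarrow> 0"
    using tendsto_real_sqrt by fastforce
  then show ?thesis
    by (simp add: tendsto_norm_zero_iff)
qed

lemma closed_sparse_set: "closed (sparse_set s :: (real ^ 'n) set)"
proof (rule closed_sequential_limits[THEN iffD2], clarify)
  fix y :: "nat \<Rightarrow> real ^ 'n" and l
  assume y: "\<forall>k. y k \<in> sparse_set s" and lim: "y \<longlonglongrightarrow> l"
  have "\<forall>i\<in>{i. l $ i \<noteq> 0}. \<forall>\<^sub>F k in sequentially. y k $ i \<noteq> 0"
    using tendsto_imp_eventually_ne[OF tendsto_vec_nth[OF lim]] by simp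
  then have "\<forall>\<^sub>F k in sequentially. \<forall>i\<in>{i. l $ i \<noteq> 0}. y k $ i \<noteq> 0"
    by (rule eventually_ball_finite[rotated]) simp
  then obtain k where "\<forall>i\<in>{i. l $ i \<noteq> 0}. y k $ i \<noteq> 0"
    unfolding eventually_sequentially by blast
  then have "{i. l $ i \<noteq> 0} \<subseteq> {i. y k $ i \<noteq> 0}"
    by blast
  then have "l0norm l \<le> l0norm (y k)"
    unfolding l0norm_def by (simp add: card_mono)
  then show "l \<in> sparse_set s"
    using y unfolding sparse_set_def by (meson le_trans mem_Collect_eq)
qed

lemma IHT_limit_point_L_stationary:
  assumes iht: "IHT_seq s L g x" and g: "\<And>y. isCont g y"
    and steps: "(\<lambda>k. x (Suc k) - x k) \<longlonglongrightarrow> 0"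
    and r: "strict_mono r" and lim: "(x \<circ> r) \<longlonglongrightarrow> l"
  shows "L_stationary s L g l"
proof -
  define y where "y v = v - (1/L) *\<^sub>R g v" for v
  have xr: "(\<lambda>k. x (r k)) \<longlonglongrightarrow> l"
    using lim by (simp add: o_def)
  have "(\<lambda>k. x (r k) + (x (Suc (r k)) - x (r k))) \<longlonglongrightarrow> l + 0"
    using tendsto_add[OF xr LIMSEQ_subseq_LIMSEQ[OF steps r, unfolded o_def]] .
  then have xr_next: "(\<lambda>k. x (Suc (r k))) \<longlonglongrightarrow> l"
    by simp
  have yr: "(\<lambda>k. y (x (r k))) \<longlonglongrightarrow> y l"
    unfolding y_def by (intro tendsto_intros xr isCont_tendsto_compose[OF g])
  have "(norm (l - y l))\<^sup>2 \<le> (norm (z - y l))\<^sup>2" if z: "z \<in> sparse_set s" for z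
  proof (rule LIMSEQ_le)
    show "(\<lambda>k. (norm (x (Suc (r k)) - y (x (r k))))\<^sup>2) \<longlonglongrightarrow> (norm (l - y l))\<^sup>2"
      by (intro tendsto_intros xr_next yr)
    show "(\<lambda>k. (norm (z - y (x (r k))))\<^sup>2) \<longlonglongrightarrow> (norm (z - y l))\<^sup>2"
      by (intro tendsto_intros yr)
    show "\<exists>N. \<forall>k\<ge>N. (norm (x (Suc (r k)) - y (x (r k))))\<^sup>2 \<le> (norm (z - y (x (r k))))\<^sup>2"
      using iht z unfolding IHT_seq_def proj_sparse_def y_def by blast
  qed
  moreover have "l \<in> sparse_set s"
    by (rule closed_sequentially[OF closed_sparse_set _ xr]) (simp add: IHT_seq_sparse[OF iht])
  ultimately show ?thesis
    unfolding L_stationary_def proj_sparse_def y_def by blast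
qed

lemma finite_imp_separated:
  fixes P :: "'a::metric_space set"
  assumes "finite P"
  obtains \<delta> where "\<delta> > 0" and "\<And>p q. p \<in> P \<Longrightarrow> q \<in> P \<Longrightarrow> p \<noteq> q \<Longrightarrow> \<delta> \<le> dist p q"
proof -
  define D where "D = (\<lambda>(p, q). dist p q) ` {(p, q). p \<in> P \<and> q \<in> P \<and> p \<noteq> q}"
  have "finite D"
    unfolding D_def using assms by (auto intro: finite_subset[of _ "P \<times> P"])
  show ?thesis
  proof (rule that[of "Min (insert 1 D)"])
    show "Min (insert 1 D) > 0"
      using \<open>finite D\<close> by (auto simp: D_def)
    show "Min (insert 1 D) \<le> dist p q" if "p \<in> P" "q \<in> P" "p \<noteq> q" for p q
      using \<open>finite D\<close> that by (intro Min_le) (auto simp: D_def)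
  qed
qed

lemma eventually_near_limit_points:
  fixes x :: "nat \<Rightarrow> 'a::heine_borel"
  assumes bnd: "bounded (range x)"
    and lim: "\<And>r l. strict_mono r \<Longrightarrow> (x \<circ> r) \<longlonglongrightarrow> l \<Longrightarrow> l \<in> P"
    and e: "e > 0"
  shows "\<forall>\<^sub>F k in sequentially. \<exists>p\<in>P. dist (x k) p < e"
proof (rule ccontr)
  assume "\<not> ?thesis"
  then obtain r :: "nat \<Rightarrow> nat" where r: "strict_mono r" and far: "\<And>n. \<not> (\<exists>p\<in>P. dist (x (r n)) p < e)"
    using not_eventually_sequentiallyD by blast
  have "bounded (range (x \<circ> r))"
    using bnd by (rule bounded_subset) auto
  then obtain l r' where r': "strict_mono r'" and conv: "((x \<circ> r) \<circ> r') \<longlonglongrightarrow> l"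
    using bounded_imp_convergent_subsequence by blast
  have "l \<in> P"
    using lim[of "r \<circ> r'" l] strict_mono_o[OF r r'] conv by (simp add: o_assoc)
  moreover obtain n where "dist (x (r (r' n))) l < e"
    using tendstoD[OF conv e] unfolding eventually_sequentially by auto
  ultimately show False
    using far[of "r' n"] by blast
qed

lemma convergent_if_vanishing_steps_finite_limit_points:
  fixes x :: "nat \<Rightarrow> 'a::heine_borel"
  assumes bnd: "bounded (range x)"
    and steps: "(\<lambda>k. dist (x (Suc k)) (x k)) \<longlonglongrightarrow> 0"
    and fin: "finite P"
    and lim: "\<And>r l. strict_mono r \<Longrightarrow> (x \<circ> r) \<longlonglongrightarrow> l \<Longrightarrow> l \<in> P"
  shows "\<exists>l. x \<longlonglongrightarrow> l \<and> l \<in> P"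
proof -
  obtain \<delta> where \<delta>: "\<delta> > 0" and sep: "\<And>p q. p \<in> P \<Longrightarrow> q \<in> P \<Longrightarrow> p \<noteq> q \<Longrightarrow> \<delta> \<le> dist p q"
    using finite_imp_separated[OF fin] by blast
  have near: "\<forall>\<^sub>F k in sequentially. \<exists>p\<in>P. dist (x k) p < e" if "e > 0" for e
    using bnd lim that by (rule eventually_near_limit_points)
  have "\<delta>/3 > 0"
    using \<delta> by simp
  then have "\<forall>\<^sub>F k in sequentially. (\<exists>p\<in>P. dist (x k) p < \<delta>/3) \<and> dist (x (Suc k)) (x k) < \<delta>/3"
    by (intro eventually_conj near order_tendstoD(2)[OF steps])
  then obtain N where N: "\<And>k. k \<ge> N \<Longrightarrow> (\<exists>p\<in>P. dist (x k) p < \<delta>/3) \<and> dist (x (Suc k)) (x k) < \<delta>/3"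
    unfolding eventually_sequentially by blast
  obtain p where p: "p \<in> P" "dist (x N) p < \<delta>/3"
    using N[of N] by blast
  \<comment> \<open>Consecutive iterates are closer than \<open>\<delta>/3\<close>, so the iterates cannot jump to another limit point.\<close>
  have stay: "dist (x k) p < \<delta>/3" if "k \<ge> N" for k
    using that
  proof (induction k rule: dec_induct)
    case (step k)
    obtain q where q: "q \<in> P" "dist (x (Suc k)) q < \<delta>/3"
      using N[of "Suc k"] step by auto
    have "dist p q \<le> dist (x k) p + dist (x (Suc k)) (x k) + dist (x (Suc k)) q"
      by (metis dist_commute dist_triangle add_right_mono order_trans)
    also have "\<dots> < \<delta>"
      using step.IH q N[OF step.hyps(1)] by simp
    finally have "p = q"
      using sep[OF p(1) q(1)] by force
    then show ?case
      using q by simp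
  qed (use p in simp)
  have "x \<longlonglongrightarrow> p"
  proof (rule tendstoI)
    fix e :: real assume "e > 0"
    then have "min e (\<delta>/3) > 0"
      using \<delta> by simp
    then have "\<forall>\<^sub>F k in sequentially. (\<exists>q\<in>P. dist (x k) q < min e (\<delta>/3)) \<and> k \<ge> N"
      by (intro eventually_conj near eventually_ge_at_top)
    then show "\<forall>\<^sub>F k in sequentially. dist (x k) p < e"
    proof (rule eventually_mono, elim conjE bexE)
      fix k q assume k: "k \<ge> N" and q: "q \<in> P" "dist (x k) q < min e (\<delta>/3)"
      have "dist p q \<le> dist (x k) p + dist (x k) q"
        by (metis dist_commute dist_triangle)
      also have "\<dots> < \<delta>"
        using stay[OF k] q(2) \<delta> by simp
      finally have "p = q"
        using sep[OF p(1) q(1)] by force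
      then show "dist (x k) p < e"
        using q(2) by simp
    qed
  qed
  then show ?thesis
    using p(1) by blast
qed

theorem theorem3p2:
  fixes A :: "real ^ 'n ^ 'm" and b :: "real ^ 'm" and s :: nat and L :: real
    and f :: "real ^ 'n \<Rightarrow> real" and g :: "real ^ 'n \<Rightarrow> real ^ 'n"
    and x :: "nat \<Rightarrow> real ^ 'n"
  assumes "s_regular s A"
    and "0 < s" and "s < CARD('n)"
    and "\<And>y. f y = (norm (A *v y - b))\<^sup>2"
    and "\<And>y. (f has_derivative (\<lambda>h. g y \<bullet> h)) (at y)"
    and "L > 2 * lambda_max (transpose A ** A)"
    and "IHT_seq s L g x"
  shows "\<exists>xs. x \<longlonglongrightarrow> xs \<and> L_stationary s L g xs"
proof -
  note reg = assms(1) and f = assms(4) and iht = assms(7)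
  define lam where "lam = lambda_max (transpose A ** A)"
  have s: "s \<le> CARD('n)" and L: "L > 0" and gap: "L / 2 - lam > 0"
    using assms(3,6) lambda_max_gram_nonneg[of A] by (auto simp: lam_def)
  have g: "\<And>y. g y = 2 *\<^sub>R (transpose A *v (A *v y - b))"
    using least_squares_gradient[OF f assms(5)] by blast
  have "f v \<le> f u + g u \<bullet> (v - u) + lam * (norm (v - u))\<^sup>2" for u v
    using least_squares_expansion[of A v b u] norm_matrix_vector_sq_le_lambda_max[of A "v - u"]
    by (simp add: f g lam_def)
  then have decrease: "(L / 2 - lam) * (norm (x (Suc k) - x k))\<^sup>2 \<le> f (x k) - f (x (Suc k))" for k
    by (rule IHT_sufficient_decrease[OF iht L])
  then have steps: "(\<lambda>k. x (Suc k) - x k) \<longlonglongrightarrow> 0"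
    by (rule steps_tendsto_zero_of_sufficient_decrease[where B = 0, OF gap]) (simp add: f)
  have "f (x (Suc k)) \<le> f (x k)" for k
    using decrease[of k] gap by (smt (verit) mult_nonneg_nonneg zero_le_power2)
  then have "decseq (\<lambda>k. f (x k))"
    by (rule decseq_SucI)
  then have "norm (A *v x k - b) \<le> norm (A *v x 0 - b)" for k
    using f by (auto simp: decseq_def intro: power2_le_imp_le)
  then have bounded: "bounded (range x)"
    by (rule bounded_IHT_seq[OF reg s iht])
  have "isCont g y" for y
    unfolding g by (intro continuous_intros bounded_linear.continuous[OF matrix_vector_mul_bounded_linear])
  then have "l \<in> {p. L_stationary s L g p}" if "strict_mono r" "(x \<circ> r) \<longlonglongrightarrow> l" for r l
    using IHT_limit_point_L_stationary[OF iht _ steps that] by simp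
  moreover have "(\<lambda>k. dist (x (Suc k)) (x k)) \<longlonglongrightarrow> 0"
    using tendsto_norm_zero[OF steps] by (simp add: dist_norm)
  ultimately show ?thesis
    using convergent_if_vanishing_steps_finite_limit_points[OF bounded]
      finite_L_stationary_least_squares[OF reg L s g] by blast
qed

end
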